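(* Let $p>0$, $q>0$, $\theta\ge 0$, and for $i=1,2$ let $R_i^{\max}>0$ and let $w_i,v_i,\psi_i$ be nonnegative functions, continuous on $[0,R_i^{\max})$ and $C^1$ on $(0,R_i^{\max})$, such that $$w_1'+\tfrac{\theta}{r}w_1\ge v_1^p,\quad v_1'\ge \psi_1,\quad \psi_1'+\tfrac{\theta}{r}\psi_1\ge w_1^q\quad\text{on }(0,R_1^{\max}),$$ $$w_2'+\tfrac{\theta}{r}w_2\le v_2^p,\quad v_2'\le \psi_2,\quad \psi_2'+\tfrac{\theta}{r}\psi_2\le w_2^q\quad\text{on }(0,R_2^{\max}),$$ with $w_i(0)=\mu_i\ge0$, $v_i(0)=m_i\ge0$, $\psi_i(0)=\nu_i\ge0$. If $\mu_1\ge\mu_2$, $m_1\ge m_2$, $\nu_1\ge\nu_2$ and $(\mu_1,m_1,\nu_1)\ne(\mu_2,m_2,\nu_2)$, then $$w_1(r)>w_2(r),\quad v_1(r)>v_2(r),\quad \psi_1(r)>\psi_2(r)\qquad\text{for all }0<r<\min\{R_1^{\max},R_2^{\max}\}.$$ *)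

theory Defs
  imports "HOL-Analysis.Analysis"
begin

definition admissible :: "real \<Rightarrow> (real \<Rightarrow> real) \<Rightarrow> bool" where
  "admissible R f \<longleftrightarrow>
     (\<forall>r\<in>{0..<R}. f r \<ge> 0) \<and>
     continuous_on {0..<R} f \<and>
     f differentiable_on {0<..<R} \<and>
     continuous_on {0<..<R} (deriv f)"

end

theory Submission
  imports Defs
begin

text \<open>The differences \<open>W = w1 - w2\<close>, \<open>V = v1 - v2\<close>, \<open>\<Psi> = \<psi>1 - \<psi>2\<close> satisfy
  \<open>W' + \<theta>/r W \<ge> v1\<^sup>p - v2\<^sup>p\<close>, \<open>V' \<ge> \<Psi>\<close> and \<open>\<Psi>' + \<theta>/r \<Psi> \<ge> w1\<^sup>q - w2\<^sup>q\<close>.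
  With the integrating factor \<open>r\<^sup>\<theta>\<close>, each difference is positive at \<open>r\<close> as soon as it is
  nonnegative at \<open>0\<close> and the difference driving it is positive on \<open>(0, r)\<close>; the drivers form
  the cycle \<open>V \<rightarrow> W \<rightarrow> \<Psi> \<rightarrow> V\<close>. One difference is positive at \<open>0\<close>, hence near \<open>0\<close>, and
  drives the other two positive near \<open>0\<close>. At the first point where positivity could fail, all
  three are driven positive, and continuity carries positivity beyond it.\<close>

text \<open>Since \<open>0 powr 0 = 0\<close>, the function \<open>\<lambda>s. s powr 0\<close> is discontinuous at \<open>0\<close>;
  only the one-sided limit is meaningful.\<close>

lemma tendsto_powr_at_right_0:
  fixes \<theta> :: real
  assumes "\<theta> \<ge> 0"
  shows "((\<lambda>s. s powr \<theta>) \<longlongrightarrow> (if \<theta> = 0 then 1 else 0)) (at_right 0)"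
proof (cases "\<theta> = 0")
  case True
  have "\<forall>\<^sub>F s in at_right 0. 1 = s powr \<theta>"
    using True by (simp add: eventually_at_right_field) (use zero_less_one in blast)
  then show ?thesis using True by (simp add: tendsto_eventually)
next
  case False
  then show ?thesis using assms
    by (auto intro!: tendsto_zero_powrI eventually_at_rightI[of 0 1])
qed

lemma pos_of_weighted_deriv_pos:
  fixes f f' :: "real \<Rightarrow> real" and \<theta> r :: real
  assumes "\<theta> \<ge> 0" "0 < r" "continuous_on {0..r} f"
    and "\<And>x. 0 < x \<Longrightarrow> x < r \<Longrightarrow> (f has_real_derivative f' x) (at x)"
    and "\<And>x. 0 < x \<Longrightarrow> x < r \<Longrightarrow> f' x + \<theta> / x * f x > 0"
    and "f 0 \<ge> 0"
  shows "f r > 0"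
proof -
  \<comment> \<open>\<open>h' = x powr \<theta> * (f' + \<theta>/x * f) > 0\<close>, so \<open>h\<close> increases from its limit \<open>\<ge> 0\<close> at \<open>0+\<close>.\<close>
  define h where "h x = x powr \<theta> * f x" for x
  have h_strict_mono: "h a < h b" if "0 < a" "a < b" "b \<le> r" for a b
  proof (rule DERIV_pos_imp_increasing_open[OF \<open>a < b\<close>])
    fix x assume x: "a < x" "x < b"
    have "(h has_real_derivative x powr \<theta> * (f' x + \<theta> / x * f x)) (at x)"
      unfolding h_def using assms(4)[of x] x that
      by (auto intro!: derivative_eq_intros simp: powr_diff field_simps)
    with assms(5)[of x] x that show "\<exists>y. (h has_real_derivative y) (at x) \<and> 0 < y"
      by auto
  next
    show "continuous_on {a..b} h"
      unfolding h_def using that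
      by (intro continuous_intros continuous_on_subset[OF assms(3)]) auto
  qed
  let ?c = "if \<theta> = 0 then 1 else 0 :: real"
  have "(h \<longlongrightarrow> ?c * f 0) (at_right 0)"
    unfolding h_def
    using tendsto_powr_at_right_0[OF assms(1)] continuous_on_Icc_at_rightD[OF assms(3,2)]
    by (rule tendsto_mult)
  moreover have "\<forall>\<^sub>F s in at_right 0. h s \<le> h (r/2)"
    using h_strict_mono assms(2)
    by (auto simp: eventually_at_right_field intro!: exI[of _ "r/2"] less_imp_le)
  ultimately have "?c * f 0 \<le> h (r/2)"
    by (rule tendsto_upperbound) simp
  then have "0 < h r"
    using h_strict_mono[of "r/2" r] assms(2,6) by (simp split: if_splits)
  then show ?thesis
    using assms(2) by (simp add: h_def zero_less_mult_iff)
qed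

lemma admissible_has_real_derivative:
  assumes "admissible R f" "0 < x" "x < R"
  shows "(f has_real_derivative deriv f x) (at x)"
proof -
  have "f differentiable_on {0<..<R}"
    using assms(1) unfolding admissible_def by blast
  then have "f differentiable (at x)"
    using assms(2,3) by (simp add: differentiable_on_eq_differentiable_at)
  then show ?thesis
    by (rule DERIV_deriv_iff_real_differentiable[THEN iffD2])
qed

lemma admissible_strict_comparison:
  fixes f1 f2 g1 g2 :: "real \<Rightarrow> real"
  assumes "admissible R1 f1" "admissible R2 f2" "\<theta> \<ge> 0" "0 < r" "r < R1" "r < R2"
    and "\<forall>x\<in>{0<..<r}. deriv f1 x + \<theta> / x * f1 x \<ge> g1 x"
    and "\<forall>x\<in>{0<..<r}. deriv f2 x + \<theta> / x * f2 x \<le> g2 x"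
    and "\<forall>x\<in>{0<..<r}. g1 x > g2 x"
    and "f1 0 \<ge> f2 0"
  shows "f1 r > f2 r"
proof -
  have "0 < (\<lambda>x. f1 x - f2 x) r"
  proof (rule pos_of_weighted_deriv_pos[where f = "\<lambda>x. f1 x - f2 x"
        and f' = "\<lambda>x. deriv f1 x - deriv f2 x"])
    have "continuous_on {0..r} f1" "continuous_on {0..r} f2"
      using assms(1,2,5,6) unfolding admissible_def by (auto elim!: continuous_on_subset)
    then show "continuous_on {0..r} (\<lambda>x. f1 x - f2 x)"
      by (intro continuous_intros)
  next
    fix x assume x: "0 < x" "x < r"
    then show "((\<lambda>x. f1 x - f2 x) has_real_derivative deriv f1 x - deriv f2 x) (at x)"
      using assms(5,6)
      by (intro DERIV_diff admissible_has_real_derivative[OF assms(1)]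
          admissible_has_real_derivative[OF assms(2)]) auto
    have "deriv f1 x + \<theta> / x * f1 x \<ge> g1 x" "deriv f2 x + \<theta> / x * f2 x \<le> g2 x" "g1 x > g2 x"
      using assms(7-9) x by auto
    then show "0 < deriv f1 x - deriv f2 x + \<theta> / x * (f1 x - f2 x)"
      by (simp add: right_diff_distrib)
  qed (use assms in auto)
  then show ?thesis by simp
qed

lemma admissible_powr_comparison:
  fixes f1 f2 u1 u2 :: "real \<Rightarrow> real"
  assumes "admissible R1 f1" "admissible R2 f2" "admissible R2 u2" "\<theta> \<ge> 0" "p > 0"
    and "0 < r" "r < R1" "r < R2"
    and "\<forall>x\<in>{0<..<r}. deriv f1 x + \<theta> / x * f1 x \<ge> u1 x powr p"
    and "\<forall>x\<in>{0<..<r}. deriv f2 x + \<theta> / x * f2 x \<le> u2 x powr p"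
    and "\<forall>x\<in>{0<..<r}. u1 x > u2 x"
    and "f1 0 \<ge> f2 0"
  shows "f1 r > f2 r"
proof (rule admissible_strict_comparison[OF assms(1,2,4,6-10) _ assms(12)])
  show "\<forall>x\<in>{0<..<r}. u1 x powr p > u2 x powr p"
    using assms(3,8,11) unfolding admissible_def by (auto intro!: powr_less_mono2[OF assms(5)])
qed

lemma eventually_at_right_pos:
  fixes f :: "real \<Rightarrow> real"
  assumes "continuous_on {0..<R} f" "0 \<le> t" "t < R" "f t > 0"
  shows "\<forall>\<^sub>F x in at_right t. f x > 0"
proof -
  have "(f \<longlongrightarrow> f t) (at t within {0..<R})"
    using assms(1-3) by (simp add: continuous_on_def)
  then have "\<forall>\<^sub>F x in at t within {0..<R}. f x > 0"
    using assms(4) by (rule order_tendstoD)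
  moreover have "\<forall>\<^sub>F x in at_right t. x \<in> {0..<R}"
    using assms(2,3) by (auto simp: eventually_at_right_field intro!: exI[of _ R])
  ultimately show ?thesis
    by (simp add: eventually_at_filter) (smt (verit) eventually_elim2)
qed

lemma open_interval_induct:
  fixes P :: "real \<Rightarrow> bool"
  assumes start: "\<forall>\<^sub>F x in at_right 0. P x"
    and step: "\<And>t. 0 < t \<Longrightarrow> t < R \<Longrightarrow> \<forall>x\<in>{0<..<t}. P x \<Longrightarrow> P t \<and> (\<forall>\<^sub>F x in at_right t. P x)"
  shows "\<forall>x\<in>{0<..<R}. P x"
proof (rule ccontr)
  assume "\<not> ?thesis"
  then obtain r where r: "0 < r" "r < R" "\<not> P r" by auto
  define S where "S = {x\<in>{0<..<R}. \<not> P x}"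
  define t where "t = Inf S"
  have "r \<in> S" "bdd_below S"
    using r by (auto simp: S_def intro: bdd_belowI[of _ 0])
  then have t_le: "t \<le> s" if "s \<in> S" for s
    using that by (simp add: t_def cInf_lower)
  have "t \<le> r" using t_le \<open>r \<in> S\<close> .
  have Inf_ge: "b \<le> t" if "\<forall>s\<in>S. b \<le> s" for b
    using that \<open>r \<in> S\<close> unfolding t_def by (intro cInf_greatest) auto
  obtain b where "b > 0" "\<forall>y>0. y < b \<longrightarrow> P y"
    using start by (auto simp: eventually_at_right_field)
  then have "b \<le> t"
    by (intro Inf_ge) (force simp: S_def)
  with \<open>b > 0\<close> \<open>t \<le> r\<close> r have "0 < t" "t < R" by auto
  moreover have "\<forall>x\<in>{0<..<t}. P x"
  proof
    fix x assume "x \<in> {0<..<t}"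
    with \<open>t \<le> r\<close> r have "x \<in> {0<..<R}" "\<not> t \<le> x" by auto
    then show "P x" using t_le unfolding S_def by blast
  qed
  ultimately have "P t" and "\<forall>\<^sub>F x in at_right t. P x"
    using step by auto
  then obtain b' where "b' > t" "\<forall>y>t. y < b' \<longrightarrow> P y"
    by (auto simp: eventually_at_right_field)
  have "b' \<le> s" if "s \<in> S" for s
  proof (rule ccontr)
    assume "\<not> b' \<le> s"
    moreover have "t \<le> s" "\<not> P s" using t_le that by (auto simp: S_def)
    ultimately show False
      using \<open>P t\<close> \<open>\<forall>y>t. y < b' \<longrightarrow> P y\<close> by (cases "s = t") auto
  qed
  then have "b' \<le> t"
    using Inf_ge by blast
  with \<open>b' > t\<close> show False by simp
qed

lemma cyclic_positivity_start:
  fixes A B C :: "real \<Rightarrow> real"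
  assumes "continuous_on {0..<R} A" "0 < R" "A 0 > 0"
    and AB: "\<And>r. 0 < r \<Longrightarrow> r < R \<Longrightarrow> \<forall>x\<in>{0<..<r}. A x > 0 \<Longrightarrow> B r > 0"
    and BC: "\<And>r. 0 < r \<Longrightarrow> r < R \<Longrightarrow> \<forall>x\<in>{0<..<r}. B x > 0 \<Longrightarrow> C r > 0"
  shows "\<forall>\<^sub>F x in at_right 0. A x > 0 \<and> B x > 0 \<and> C x > 0"
proof -
  obtain b where "b > 0" "\<forall>x>0. x < b \<longrightarrow> A x > 0"
    using eventually_at_right_pos[OF assms(1) _ assms(2,3)]
    by (auto simp: eventually_at_right_field)
  define \<delta> where "\<delta> = min b R"
  have "\<delta> > 0" "\<delta> \<le> R" using \<open>b > 0\<close> assms(2) by (auto simp: \<delta>_def)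
  have A: "\<forall>x\<in>{0<..<\<delta>}. A x > 0"
    using \<open>\<forall>x>0. x < b \<longrightarrow> A x > 0\<close> by (auto simp: \<delta>_def)
  have B: "\<forall>x\<in>{0<..<\<delta>}. B x > 0"
    using A \<open>\<delta> \<le> R\<close> AB by simp
  have C: "\<forall>x\<in>{0<..<\<delta>}. C x > 0"
    using B \<open>\<delta> \<le> R\<close> BC by simp
  show ?thesis
    using A B C \<open>\<delta> > 0\<close> by (auto simp: eventually_at_right_field)
qed

lemma cyclic_positivity:
  fixes A B C :: "real \<Rightarrow> real"
  assumes "continuous_on {0..<R} A" "continuous_on {0..<R} B" "continuous_on {0..<R} C" "0 < R"
    and AB: "\<And>r. 0 < r \<Longrightarrow> r < R \<Longrightarrow> \<forall>x\<in>{0<..<r}. A x > 0 \<Longrightarrow> B r > 0"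
    and BC: "\<And>r. 0 < r \<Longrightarrow> r < R \<Longrightarrow> \<forall>x\<in>{0<..<r}. B x > 0 \<Longrightarrow> C r > 0"
    and CA: "\<And>r. 0 < r \<Longrightarrow> r < R \<Longrightarrow> \<forall>x\<in>{0<..<r}. C x > 0 \<Longrightarrow> A r > 0"
    and "A 0 > 0 \<or> B 0 > 0 \<or> C 0 > 0"
  shows "\<forall>x\<in>{0<..<R}. A x > 0 \<and> B x > 0 \<and> C x > 0"
proof (rule open_interval_induct)
  show "\<forall>\<^sub>F x in at_right 0. A x > 0 \<and> B x > 0 \<and> C x > 0"
    using assms(8)
  proof (elim disjE)
    assume "A 0 > 0"
    from cyclic_positivity_start[OF assms(1,4) this AB BC] show ?thesis .
  next
    assume "B 0 > 0"
    from cyclic_positivity_start[OF assms(2,4) this BC CA] show ?thesis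
      by (rule eventually_mono) auto
  next
    assume "C 0 > 0"
    from cyclic_positivity_start[OF assms(3,4) this CA AB] show ?thesis
      by (rule eventually_mono) auto
  qed
next
  fix t assume t: "0 < t" "t < R" and "\<forall>x\<in>{0<..<t}. A x > 0 \<and> B x > 0 \<and> C x > 0"
  then have "\<forall>x\<in>{0<..<t}. A x > 0" "\<forall>x\<in>{0<..<t}. B x > 0" "\<forall>x\<in>{0<..<t}. C x > 0"
    by auto
  then have "A t > 0" "B t > 0" "C t > 0"
    using AB[OF t] BC[OF t] CA[OF t] by auto
  moreover from this have "\<forall>\<^sub>F x in at_right t. A x > 0" "\<forall>\<^sub>F x in at_right t. B x > 0"
      "\<forall>\<^sub>F x in at_right t. C x > 0"
    using eventually_at_right_pos[OF assms(1)] eventually_at_right_pos[OF assms(2)]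
      eventually_at_right_pos[OF assms(3)] t by auto
  ultimately show "(A t > 0 \<and> B t > 0 \<and> C t > 0) \<and>
      (\<forall>\<^sub>F x in at_right t. A x > 0 \<and> B x > 0 \<and> C x > 0)"
    by (simp add: eventually_conj_iff)
qed

theorem lemma6p1:
  fixes p q \<theta> R1 R2 \<mu>1 \<mu>2 m1 m2 \<nu>1 \<nu>2 :: real
    and w1 v1 \<psi>1 w2 v2 \<psi>2 :: "real \<Rightarrow> real"
  assumes "p > 0" "q > 0" "\<theta> \<ge> 0" "R1 > 0" "R2 > 0"
    and "admissible R1 w1" "admissible R1 v1" "admissible R1 \<psi>1"
    and "admissible R2 w2" "admissible R2 v2" "admissible R2 \<psi>2"
    and "\<forall>r\<in>{0<..<R1}. deriv w1 r + \<theta> / r * w1 r \<ge> v1 r powr p"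
    and "\<forall>r\<in>{0<..<R1}. deriv v1 r \<ge> \<psi>1 r"
    and "\<forall>r\<in>{0<..<R1}. deriv \<psi>1 r + \<theta> / r * \<psi>1 r \<ge> w1 r powr q"
    and "\<forall>r\<in>{0<..<R2}. deriv w2 r + \<theta> / r * w2 r \<le> v2 r powr p"
    and "\<forall>r\<in>{0<..<R2}. deriv v2 r \<le> \<psi>2 r"
    and "\<forall>r\<in>{0<..<R2}. deriv \<psi>2 r + \<theta> / r * \<psi>2 r \<le> w2 r powr q"
    and "w1 0 = \<mu>1" "v1 0 = m1" "\<psi>1 0 = \<nu>1"
    and "w2 0 = \<mu>2" "v2 0 = m2" "\<psi>2 0 = \<nu>2"
    and "\<mu>1 \<ge> 0" "m1 \<ge> 0" "\<nu>1 \<ge> 0" "\<mu>2 \<ge> 0" "m2 \<ge> 0" "\<nu>2 \<ge> 0"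
    and "\<mu>1 \<ge> \<mu>2" "m1 \<ge> m2" "\<nu>1 \<ge> \<nu>2"
    and "(\<mu>1, m1, \<nu>1) \<noteq> (\<mu>2, m2, \<nu>2)"
  shows "\<forall>r\<in>{0<..<min R1 R2}. w1 r > w2 r \<and> v1 r > v2 r \<and> \<psi>1 r > \<psi>2 r"
proof -
  define R where "R = min R1 R2"
  have below_R: "r < R1" "r < R2" if "r < R" for r
    using that by (simp_all add: R_def)
  have cont_diff: "continuous_on {0..<R} (\<lambda>x. f1 x - f2 x)"
    if "admissible R1 f1" "admissible R2 f2" for f1 f2
    using that unfolding admissible_def R_def
    by (intro continuous_intros) (auto elim!: continuous_on_subset)
  have "\<forall>x\<in>{0<..<R}. v1 x - v2 x > 0 \<and> w1 x - w2 x > 0 \<and> \<psi>1 x - \<psi>2 x > 0"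
  proof (rule cyclic_positivity[where A = "\<lambda>x. v1 x - v2 x" and B = "\<lambda>x. w1 x - w2 x"
        and C = "\<lambda>x. \<psi>1 x - \<psi>2 x"])
    show "continuous_on {0..<R} (\<lambda>x. v1 x - v2 x)" "continuous_on {0..<R} (\<lambda>x. w1 x - w2 x)"
      "continuous_on {0..<R} (\<lambda>x. \<psi>1 x - \<psi>2 x)"
      using assms(6-11) by (simp_all add: cont_diff)
    show "0 < R" using assms(4,5) by (simp add: R_def)
    show "v1 0 - v2 0 > 0 \<or> w1 0 - w2 0 > 0 \<or> \<psi>1 0 - \<psi>2 0 > 0"
      using assms(18-23,30-33) by auto
  next
    fix r assume "0 < r" "r < R" "\<forall>x\<in>{0<..<r}. v1 x - v2 x > 0"
    with below_R[of r] show "w1 r - w2 r > 0"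
      using admissible_powr_comparison[OF assms(6,9,10,3,1), of r v1]
        assms(12,15,18,21,30) by auto
  next
    fix r assume "0 < r" "r < R" "\<forall>x\<in>{0<..<r}. w1 x - w2 x > 0"
    with below_R[of r] show "\<psi>1 r - \<psi>2 r > 0"
      using admissible_powr_comparison[OF assms(8,11,9,3,2), of r w1]
        assms(14,17,20,23,32) by auto
  next
    fix r assume "0 < r" "r < R" "\<forall>x\<in>{0<..<r}. \<psi>1 x - \<psi>2 x > 0"
    with below_R[of r] show "v1 r - v2 r > 0"
      using admissible_strict_comparison[OF assms(7,10) order_refl, of r \<psi>1 \<psi>2]
        assms(13,16,19,22,31) by auto
  qed
  then show ?thesis
    by (simp add: R_def)
qed

end
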